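(* Let $Q,R,F\subseteq\mathcal{P}$, and define $\mu=\gcd\!\left(\dfrac{\xi_{\mathcal{P}}}{TM(\xi_F)},\ TM(\xi_Q),\ TM(\xi_R)\right)$ and $\nu=\dfrac{\xi_Q}{TM(\xi_Q)}\cdot\dfrac{\xi_R}{TM(\xi_R)}\cdot\dfrac{\xi_{F^c}}{TM(\xi_{F^c})}$. Then $\xi_{(Q\cap R)\setminus F}=\xi_{(Q\cap R)\cap F^c}=\mu\cdot\nu$.
   Context: $\mathcal{P}=\{P_1,\ldots,P_n\}$, $F^c=\mathcal{P}\setminus F$; $\varphi:2^{\mathcal{P}}\to\mathbb{F}_2^n$ sends a set to its indicator vector; for $S\subseteq\mathcal{P}$, $\xi_S(Y_1,\ldots,Y_n)=\prod_{i=1}^n(1+Y_i+\varphi(S)_i)$, i.e. $\xi_S=\prod_{i:P_i\in S}Y_i\cdot\prod_{i:P_i\notin S}(1+Y_i)$; in particular $\xi_{\mathcal{P}}=Y_1\cdots Y_n$. $TM(f)$ is the smallest monomial of $f$ in the lexicographic order with $Y_n\prec\cdots\prec Y_1$. The quotient $\xi_S/TM(\xi_S)$ is the polynomial $\prod_{i:P_i\notin S}(1+Y_i)$, and $\xi_{\mathcal{P}}/TM(\xi_F)=\prod_{i:P_i\notin F}Y_i$; the gcd is that of monomials; products and the equality are in the Boolean polynomial ring $\mathbb{F}_2[\bar Y]/\langle Y_i^2-Y_i\rangle$. *)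

theory Defs
  imports Main
begin

text \<open>Boolean polynomial ring F2[Y_0..Y_(n-1)] / (Y_i^2 - Y_i).
  Every element has a unique multilinear representative; we represent it by the
  (finite) set of its monomials, a monomial being the (finite) set of variable
  indices occurring in it. Player P_(i+1) corresponds to index i < n.\<close>

type_synonym bpoly = "nat set set"

definition bzero :: bpoly where "bzero = {}"
definition bone :: bpoly where "bone = {{}}"
definition bvar :: "nat \<Rightarrow> bpoly" where "bvar i = {{i}}"

definition badd :: "bpoly \<Rightarrow> bpoly \<Rightarrow> bpoly" where
  "badd p q = (p - q) \<union> (q - p)"

text \<open>Product of monomials is union (since Y_i^2 = Y_i); coefficients mod 2.\<close>
definition bmul :: "bpoly \<Rightarrow> bpoly \<Rightarrow> bpoly" where
  "bmul p q = {m. odd (card {(a, b). a \<in> p \<and> b \<in> q \<and> a \<union> b = m})}"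

fun bprod_upto :: "(nat \<Rightarrow> bpoly) \<Rightarrow> nat \<Rightarrow> bpoly" where
  "bprod_upto f 0 = bone"
| "bprod_upto f (Suc k) = bmul (bprod_upto f k) (f k)"

definition phi_const :: "nat set \<Rightarrow> nat \<Rightarrow> bpoly" where
  "phi_const S i = (if i \<in> S then bone else bzero)"

definition xi :: "nat \<Rightarrow> nat set \<Rightarrow> bpoly" where
  "xi n S = bprod_upto (\<lambda>i. badd (badd bone (bvar i)) (phi_const S i)) n"

text \<open>Lexicographic order on multilinear monomials with Y_(n-1) < ... < Y_0
  (variable Y_0 most significant): m is smaller than m' iff at the first index
  where they differ, m' contains it.\<close>
definition lex_less :: "nat set \<Rightarrow> nat set \<Rightarrow> bool" where
  "lex_less m m' \<longleftrightarrow> (\<exists>i. i \<in> m' \<and> i \<notin> m \<and> (\<forall>j<i. j \<in> m \<longleftrightarrow> j \<in> m'))"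

definition TM :: "bpoly \<Rightarrow> nat set" where
  "TM p = (THE m. m \<in> p \<and> (\<forall>m'\<in>p. m' \<noteq> m \<longrightarrow> lex_less m m'))"

definition bdiv_mono :: "bpoly \<Rightarrow> nat set \<Rightarrow> bpoly" where
  "bdiv_mono p t = (\<lambda>m. m - t) ` p"

definition the_mono :: "bpoly \<Rightarrow> nat set" where
  "the_mono p = (THE m. p = {m})"

definition mono_gcd3 :: "bpoly \<Rightarrow> bpoly \<Rightarrow> bpoly \<Rightarrow> bpoly" where
  "mono_gcd3 a b c = {the_mono a \<inter> the_mono b \<inter> the_mono c}"

end

theory Submission
  imports Defs "HOL-Library.FuncSet"
begin

text \<open>For \<open>S \<subseteq> P\<close>, \<open>\<xi>\<^sub>S\<close> is the sum of all monomials lying between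
  \<open>Y\<^sup>S\<close> and \<open>Y\<^sup>P\<close>. Such interval polynomials are closed under multiplication:
  because \<open>(1 + Y\<^sub>i)\<^sup>2 = 1 + Y\<^sub>i\<close> in the Boolean ring, a monomial of the product
  arises in \<open>3\<^sup>k\<close> ways, an odd number. The trailing monomial of an interval
  polynomial is its bottom \<open>Y\<^sup>S\<close>, so \<open>\<mu> = Y\<^bsup>Q \<inter> R \<inter> F\<^sup>c\<^esup>\<close>,
  \<open>\<nu>\<close> is the interval polynomial from \<open>1\<close> to \<open>Y\<^bsup>Q\<^sup>c \<union> R\<^sup>c \<union> F\<^esup>\<close>, and \<open>\<mu>\<nu>\<close> is the
  interval polynomial of \<open>\<xi>\<^bsub>Q \<inter> R \<inter> F\<^sup>c\<^esub>\<close>.\<close>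

definition interval_poly :: "nat set \<Rightarrow> nat set \<Rightarrow> bpoly" where
  "interval_poly A B = {m. A \<subseteq> m \<and> m \<subseteq> A \<union> B}"

definition covering_pairs :: "'a set \<Rightarrow> ('a set \<times> 'a set) set" where
  "covering_pairs C = {(s, t). s \<union> t = C}"

lemma card_covering_pairs:
  assumes "finite C"
  shows "card (covering_pairs C) = 3 ^ card C"
proof -
  let ?pair = "\<lambda>f. ({x\<in>C. f x \<noteq> (0::nat)}, {x\<in>C. f x \<noteq> 1})"
  let ?code = "\<lambda>(s, t). restrict (\<lambda>x. if x \<notin> s then 0 else if x \<notin> t then 1 else 2::nat) C"
  have "bij_betw ?pair (C \<rightarrow>\<^sub>E {0, 1, 2}) (covering_pairs C)"
  proof (rule bij_betw_byWitness[where f' = ?code])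
    show "\<forall>f\<in>C \<rightarrow>\<^sub>E {0, 1, 2}. ?code (?pair f) = f"
      by (fastforce simp: PiE_iff fun_eq_iff)
    show "\<forall>p\<in>covering_pairs C. ?pair (?code p) = p"
      by (auto simp: covering_pairs_def)
    show "?pair ` (C \<rightarrow>\<^sub>E {0, 1, 2}) \<subseteq> covering_pairs C"
      by (auto simp: covering_pairs_def)
    show "?code ` covering_pairs C \<subseteq> C \<rightarrow>\<^sub>E {0, 1, 2}"
      by (auto simp: PiE_iff split: if_splits)
  qed
  then have "card (C \<rightarrow>\<^sub>E {0, 1, 2::nat}) = card (covering_pairs C)"
    by (rule bij_betw_same_card)
  moreover have "card (C \<rightarrow>\<^sub>E {0, 1, 2::nat}) = 3 ^ card C"
    using assms by (simp add: card_funcsetE numeral_3_eq_3)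
  ultimately show ?thesis by simp
qed

lemma bmul_interval_poly:
  assumes "finite B1" and "finite B2" and "(A1 \<union> A2) \<inter> (B1 \<union> B2) = {}"
  shows "bmul (interval_poly A1 B1) (interval_poly A2 B2) = interval_poly (A1 \<union> A2) (B1 \<union> B2)"
proof (rule set_eqI)
  fix m
  define S where "S = {(a, b). a \<in> interval_poly A1 B1 \<and> b \<in> interval_poly A2 B2 \<and> a \<union> b = m}"
  have "odd (card S) \<longleftrightarrow> m \<in> interval_poly (A1 \<union> A2) (B1 \<union> B2)"
  proof (cases "m \<in> interval_poly (A1 \<union> A2) (B1 \<union> B2)")
    case False
    then have "S = {}" by (auto simp: S_def interval_poly_def)
    with False show ?thesis by simp
  next
    case True
    then have m: "A1 \<union> A2 \<subseteq> m" "m \<subseteq> A1 \<union> A2 \<union> B1 \<union> B2"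
      by (auto simp: interval_poly_def)
    define C where "C = m \<inter> B1 \<inter> B2"
    text \<open>Outside \<open>C\<close> each variable of \<open>m\<close> can come from one factor only; on \<open>C\<close>
      it can come from either factor or from both.\<close>
    define extend where
      "extend = (\<lambda>(s, t). (A1 \<union> (m \<inter> B1 - B2) \<union> s, A2 \<union> (m \<inter> B2 - B1) \<union> t))"
    let ?restr = "\<lambda>(a, b). (a \<inter> C, b \<inter> C)"
    have "bij_betw extend (covering_pairs C) S"
    proof (rule bij_betw_byWitness[where f' = ?restr])
      show "\<forall>p\<in>covering_pairs C. ?restr (extend p) = p"
        using assms(3) by (auto simp: covering_pairs_def extend_def C_def)
      show "\<forall>p\<in>S. extend (?restr p) = p"
        using assms(3) by (auto simp: S_def interval_poly_def extend_def C_def)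
      show "extend ` covering_pairs C \<subseteq> S"
        using assms(3) m by (auto simp: covering_pairs_def S_def interval_poly_def extend_def C_def)
      show "?restr ` S \<subseteq> covering_pairs C"
        by (auto simp: covering_pairs_def S_def C_def)
    qed
    then have "card S = 3 ^ card C"
      using card_covering_pairs[of C] assms(1) by (simp add: bij_betw_same_card C_def)
    with True show ?thesis by simp
  qed
  then show "m \<in> bmul (interval_poly A1 B1) (interval_poly A2 B2) \<longleftrightarrow>
      m \<in> interval_poly (A1 \<union> A2) (B1 \<union> B2)"
    by (simp add: bmul_def S_def)
qed

lemma interval_poly_empty_right [simp]: "interval_poly A {} = {A}"
  by (auto simp: interval_poly_def)

lemma TM_interval_poly:
  assumes "A \<inter> B = {}"
  shows "TM (interval_poly A B) = A"
  unfolding TM_def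
proof (rule the_equality)
  have "lex_less A m" if "m \<in> interval_poly A B" "m \<noteq> A" for m
  proof -
    have "A \<subseteq> m" using that(1) by (simp add: interval_poly_def)
    with that(2) have "\<exists>i. i \<in> m - A" by blast
    define i where "i = (LEAST i. i \<in> m - A)"
    have "i \<in> m - A" unfolding i_def by (rule LeastI_ex) fact
    moreover have "\<forall>j<i. j \<in> A \<longleftrightarrow> j \<in> m"
      using \<open>A \<subseteq> m\<close> not_less_Least unfolding i_def by blast
    ultimately show ?thesis unfolding lex_less_def by blast
  qed
  then show "A \<in> interval_poly A B \<and> (\<forall>m\<in>interval_poly A B. m \<noteq> A \<longrightarrow> lex_less A m)"
    by (auto simp: interval_poly_def)
next
  fix m
  assume m: "m \<in> interval_poly A B \<and> (\<forall>m'\<in>interval_poly A B. m' \<noteq> m \<longrightarrow> lex_less m m')"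
  show "m = A"
  proof (rule ccontr)
    assume "m \<noteq> A"
    with m have "lex_less m A" by (auto simp: interval_poly_def)
    moreover have "A \<subseteq> m" using m by (simp add: interval_poly_def)
    ultimately show False unfolding lex_less_def by blast
  qed
qed

lemma bdiv_mono_interval_poly:
  assumes "A \<inter> B = {}"
  shows "bdiv_mono (interval_poly A B) A = interval_poly {} B"
  unfolding bdiv_mono_def
proof
  show "(\<lambda>m. m - A) ` interval_poly A B \<subseteq> interval_poly {} B"
    by (auto simp: interval_poly_def)
  show "interval_poly {} B \<subseteq> (\<lambda>m. m - A) ` interval_poly A B"
  proof
    fix s
    assume "s \<in> interval_poly {} B"
    then have "s = (A \<union> s) - A" "A \<union> s \<in> interval_poly A B"
      using assms by (auto simp: interval_poly_def)
    then show "s \<in> (\<lambda>m. m - A) ` interval_poly A B" by blast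
  qed
qed

lemma xi_factor_eq:
  "badd (badd bone (bvar i)) (phi_const S i) =
    (if i \<in> S then interval_poly {i} {} else interval_poly {} {i})"
proof -
  have "interval_poly {} {i} = {{}, {i}}" by (auto simp: interval_poly_def)
  then show ?thesis
    by (auto simp: phi_const_def badd_def bone_def bzero_def bvar_def)
qed

lemma xi_eq_interval_poly: "xi n S = interval_poly (S \<inter> {..<n}) ({..<n} - S)"
  unfolding xi_def
proof (induction n)
  case 0
  show ?case by (auto simp: interval_poly_def bone_def)
next
  case (Suc k)
  have "bmul (interval_poly (S \<inter> {..<k}) ({..<k} - S)) (interval_poly {k} {}) =
      interval_poly (S \<inter> {..<Suc k}) ({..<Suc k} - S)" if "k \<in> S"
    using that by (subst bmul_interval_poly) (auto simp: lessThan_Suc insert_Diff_if)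
  moreover have "bmul (interval_poly (S \<inter> {..<k}) ({..<k} - S)) (interval_poly {} {k}) =
      interval_poly (S \<inter> {..<Suc k}) ({..<Suc k} - S)" if "k \<notin> S"
    using that by (subst bmul_interval_poly) (auto simp: lessThan_Suc insert_Diff_if)
  ultimately show ?case
    using Suc by (simp add: xi_factor_eq)
qed

lemma xi_subset:
  assumes "S \<subseteq> {..<n}"
  shows "xi n S = interval_poly S ({..<n} - S)"
  using assms by (simp add: xi_eq_interval_poly Int_absorb2)

lemma TM_xi:
  assumes "S \<subseteq> {..<n}"
  shows "TM (xi n S) = S"
  using assms by (simp add: xi_subset TM_interval_poly)

lemma xi_div_TM:
  assumes "S \<subseteq> {..<n}"
  shows "bdiv_mono (xi n S) (TM (xi n S)) = interval_poly {} ({..<n} - S)"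
  using assms by (simp add: xi_subset TM_interval_poly bdiv_mono_interval_poly)

lemma mono_gcd3_singletons [simp]: "mono_gcd3 {a} {b} {c} = {a \<inter> b \<inter> c}"
  by (simp add: mono_gcd3_def the_mono_def)

theorem mainTheorem17:
  fixes n :: nat and Q R F :: "nat set"
  assumes "Q \<subseteq> {..<n}" and "R \<subseteq> {..<n}" and "F \<subseteq> {..<n}"
  shows "xi n ((Q \<inter> R) - F) = xi n ((Q \<inter> R) \<inter> ({..<n} - F))
    \<and> xi n ((Q \<inter> R) \<inter> ({..<n} - F)) =
      bmul (mono_gcd3 (bdiv_mono (xi n {..<n}) (TM (xi n F)))
                      {TM (xi n Q)} {TM (xi n R)})
           (bmul (bmul (bdiv_mono (xi n Q) (TM (xi n Q)))
                       (bdiv_mono (xi n R) (TM (xi n R))))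
                 (bdiv_mono (xi n ({..<n} - F)) (TM (xi n ({..<n} - F)))))"
proof -
  let ?M = "Q \<inter> R \<inter> ({..<n} - F)"
  have M: "Q \<inter> R - F = ?M"
    using assms(1) by auto
  have \<mu>: "mono_gcd3 (bdiv_mono (xi n {..<n}) (TM (xi n F))) {Q} {R} = {?M}"
    by (simp add: TM_xi[OF assms(3)] xi_subset bdiv_mono_def Int_ac)
  have div_Fc: "bdiv_mono (xi n ({..<n} - F)) (TM (xi n ({..<n} - F))) = interval_poly {} F"
    using xi_div_TM[of "{..<n} - F" n] assms(3) by (simp add: double_diff)
  have "{..<n} - ?M = ({..<n} - Q) \<union> ({..<n} - R) \<union> F"
    using assms(3) by auto
  then have \<nu>: "bmul (bmul (interval_poly {} ({..<n} - Q)) (interval_poly {} ({..<n} - R)))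
      (interval_poly {} F) = interval_poly {} ({..<n} - ?M)"
    using assms(3) by (simp add: bmul_interval_poly finite_subset)
  have "xi n ?M = interval_poly ?M ({..<n} - ?M)"
    by (rule xi_subset) auto
  also have "\<dots> = bmul {?M} (interval_poly {} ({..<n} - ?M))"
    using bmul_interval_poly[of "{}" "{..<n} - ?M" ?M "{}"] by simp
  finally show ?thesis
    unfolding M xi_div_TM[OF assms(1)] xi_div_TM[OF assms(2)] div_Fc
    unfolding TM_xi[OF assms(1)] TM_xi[OF assms(2)] \<mu> \<nu> by simp
qed

end
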